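(* For all integers $n\ge0$, $r\ge0$ and every real $x\ne0$, the $r$th derivative of $\mathfrak{C}_n$ satisfies $$\mathfrak{C}_n^{(r)}(x)=\frac{r!}{x^r}\sum_{k=0}^{r}\binom rk(-1)^{r-k}\sum_{j_0+j_1+\cdots+j_k=n}\binom{n}{j_0,j_1,\dots,j_k}\mathfrak{C}_{j_0}(x)\mathfrak{C}_{j_1}(x)\cdots\mathfrak{C}_{j_k}(x),$$ where the inner sum runs over all tuples of non-negative integers $(j_0,\dots,j_k)$ with sum $n$.
   Context: For $n\ge1$ the central factorial is $x^{[n]}=x\,(x+\tfrac n2-1)(x+\tfrac n2-2)\cdots(x-\tfrac n2+1)$ (a product of $n$ factors), and $x^{[0]}=1$. The central factorial numbers of the second kind $T(n,k)$ ($0\le k\le n$) are defined by $x^n=\sum_{k=0}^n T(n,k)\,x^{[k]}$; equivalently $T(n,k)=\frac1{k!}\sum_{j=0}^k(-1)^j\binom kj\left(\frac k2-j\right)^n$, and $T(n,k)=0$ for $k>n$. The $n$th central Fubini-like polynomial is $\mathfrak{C}_n(x)=\sum_{k=0}^n k!\,T(n,k)\,x^k$. *)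

theory Defs
  imports "HOL-Analysis.Analysis"
begin

text \<open>Central factorial numbers of the second kind, via the explicit formula
 T(n,k) = 1/k! * sum_{j=0}^k (-1)^j binom(k,j) (k/2 - j)^n  (zero for k > n).\<close>
definition central_T :: "nat \<Rightarrow> nat \<Rightarrow> real" where
  "central_T n k = (if k > n then 0 else
     (1 / fact k) * (\<Sum>j\<le>k. (-1) ^ j * real (k choose j) * (real k / 2 - real j) ^ n))"

definition central_fubini :: "nat \<Rightarrow> real poly" where
  "central_fubini n = (\<Sum>k\<le>n. monom (fact k * central_T n k) k)"

text \<open>Compositions of n into k+1 non-negative parts (j_0,...,j_k), encoded as
 functions nat => nat vanishing beyond index k.\<close>
definition compositions :: "nat \<Rightarrow> nat \<Rightarrow> (nat \<Rightarrow> nat) set" where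
  "compositions k n = {j. (\<forall>i>k. j i = 0) \<and> (\<Sum>i\<le>k. j i) = n}"

definition multinom :: "nat \<Rightarrow> nat \<Rightarrow> (nat \<Rightarrow> nat) \<Rightarrow> real" where
  "multinom n k j = fact n / (\<Prod>i\<le>k. fact (j i))"

end

theory Submission
  imports Defs "HOL-Computational_Algebra.Formal_Power_Series"
begin

text \<open>Since k! T(n,k) is n! times the t^n-coefficient of S^k, where S = e^(t/2) - e^(-t/2),
  the exponential generating function of the C_n(x) is G = 1/(1 - x S) = \<Sum>_k (x S)^k.
  The operator x^r (d/dx)^r multiplies x^k by r! (k choose r), which turns G into
  r! (x S)^r G^(r+1) = r! G (G - 1)^r. Expanding (G - 1)^r binomially and reading off the
  t^n-coefficient of each G^(k+1) as a multinomial convolution of the C_j(x) gives the formula.\<close>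

no_notation vec_nth (infixl \<open>$\<close> 90)
notation fps_nth (infixl \<open>$\<close> 75)

lemma fps_minus_one_power: "(- 1 :: 'a::comm_ring_1 fps) ^ n = fps_const ((- 1) ^ n)"
  by (metis fps_const_1_eq_1 fps_const_neg fps_const_power)

lemma fps_mult_diff_one_power_nth:
  fixes f :: "'a::comm_ring_1 fps"
  shows "(f * (f - 1) ^ r) $ n = (\<Sum>k\<le>r. of_nat (r choose k) * (-1) ^ (r - k) * (f ^ Suc k) $ n)"
proof -
  have "(f - 1) ^ r = (\<Sum>k\<le>r. of_nat (r choose k) * f ^ k * (-1) ^ (r - k))"
    using binomial_ring[of f "-1" r] by simp
  then have "f * (f - 1) ^ r = (\<Sum>k\<le>r. fps_const (of_nat (r choose k) * (-1) ^ (r - k)) * f ^ Suc k)"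
    by (simp add: sum_distrib_left fps_minus_one_power mult_ac flip: fps_of_nat)
  then show ?thesis
    by (simp add: fps_sum_nth)
qed

lemma fps_compose_scaled_nth:
  "(A oo fps_const c * B) $ n = (\<Sum>k\<le>n. A $ k * c ^ k * (B ^ k) $ n :: 'a::comm_ring_1)"
  by (simp add: fps_compose_nth power_mult_distrib atLeast0AtMost mult.assoc)

lemma finite_compositions: "finite (compositions k n)"
proof -
  have "compositions k n \<subseteq> (\<lambda>f i. if i \<le> k then f i else 0) ` (PiE {..k} (\<lambda>_. {..n}))"
  proof
    fix j assume j: "j \<in> compositions k n"
    then have "j = (\<lambda>i. if i \<le> k then restrict j {..k} i else 0)"
      by (auto simp: compositions_def fun_eq_iff)
    moreover have "restrict j {..k} \<in> PiE {..k} (\<lambda>_. {..n})"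
      using j member_le_sum[of _ "{..k}" j] by (auto simp: compositions_def)
    ultimately show "j \<in> (\<lambda>f i. if i \<le> k then f i else 0) ` (PiE {..k} (\<lambda>_. {..n}))"
      by blast
  qed
  then show ?thesis
    by (rule finite_subset) (auto intro: finite_PiE)
qed

lemma compositions_0: "compositions 0 n = {(\<lambda>_. 0)(0 := n)}"
  by (auto simp: compositions_def fun_eq_iff)

lemma sum_compositions_Suc:
  "(\<Sum>j\<in>compositions (Suc k) n. g j) =
   (\<Sum>(a, j)\<in>(SIGMA a:{..n}. compositions k (n - a)). g (j(Suc k := a)))"
proof (rule sum.reindex_bij_witness[where j = "\<lambda>j. (j (Suc k), j(Suc k := 0))"
      and i = "\<lambda>(a, j). j(Suc k := a)"])
  fix j assume "j \<in> compositions (Suc k) n"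
  moreover have "(\<Sum>i\<le>k. (j(Suc k := 0)) i) = (\<Sum>i\<le>k. j i)"
    by (rule sum.cong) auto
  ultimately show "(j (Suc k), j(Suc k := 0)) \<in> (SIGMA a:{..n}. compositions k (n - a))"
    by (auto simp: compositions_def)
qed (auto simp: compositions_def fun_eq_iff)

lemma fps_power_Suc_nth_compositions:
  fixes F :: "'a::comm_semiring_1 fps"
  shows "(F ^ Suc k) $ n = (\<Sum>j\<in>compositions k n. \<Prod>i\<le>k. F $ j i)"
proof (induction k arbitrary: n)
  case 0
  then show ?case by (simp add: compositions_0)
next
  case (Suc k)
  have extend: "F $ a * (\<Prod>i\<le>k. F $ j i) = (\<Prod>i\<le>Suc k. F $ (j(Suc k := a)) i)" for a j
  proof -
    have "(\<Prod>i\<le>k. F $ (j(Suc k := a)) i) = (\<Prod>i\<le>k. F $ j i)"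
      by (rule prod.cong) auto
    then show ?thesis by (simp add: mult.commute)
  qed
  have "(F ^ Suc (Suc k)) $ n = (\<Sum>a\<le>n. F $ a * (F ^ Suc k) $ (n - a))"
    by (simp only: power_Suc[of F "Suc k"] fps_mult_nth atLeast0AtMost)
  also have "\<dots> = (\<Sum>a\<le>n. \<Sum>j\<in>compositions k (n - a). F $ a * (\<Prod>i\<le>k. F $ j i))"
    by (simp only: Suc.IH sum_distrib_left)
  also have "\<dots> = (\<Sum>(a, j)\<in>(SIGMA a:{..n}. compositions k (n - a)). F $ a * (\<Prod>i\<le>k. F $ j i))"
    by (rule sum.Sigma) (auto simp: finite_compositions)
  also have "\<dots> = (\<Sum>j\<in>compositions (Suc k) n. \<Prod>i\<le>Suc k. F $ j i)"
    by (simp only: extend sum_compositions_Suc)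
  finally show ?case .
qed

lemma fps_mult_geometric_nth:
  "(F * Abs_fps (\<lambda>_. 1)) $ n = (\<Sum>i\<le>n. F $ i :: 'a::semiring_1)"
  by (simp add: fps_mult_nth atLeast0AtMost)

lemma fps_X_power_mult_geometric_power_nth:
  "(fps_X ^ r * Abs_fps (\<lambda>_. 1) ^ Suc r) $ k = (of_nat (k choose r) :: 'a::comm_semiring_1)"
proof (induction r arbitrary: k)
  case 0
  then show ?case by simp
next
  case (Suc r)
  have reassoc: "fps_X ^ Suc r * Abs_fps (\<lambda>_. 1) ^ Suc (Suc r) =
        fps_X * ((fps_X ^ r * Abs_fps (\<lambda>_. 1) ^ Suc r) * Abs_fps (\<lambda>_. 1) :: 'a fps)"
    by (simp only: power_Suc2 mult_ac)
  show ?case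
  proof (cases k)
    case (Suc m)
    have "(\<Sum>i\<le>m. (fps_X ^ r * Abs_fps (\<lambda>_. 1) ^ Suc r) $ i) = (\<Sum>i\<le>m. of_nat (i choose r) :: 'a)"
      by (intro sum.cong refl Suc.IH)
    also have "\<dots> = of_nat (k choose Suc r)"
      by (simp add: Suc sum_choose_upper flip: of_nat_sum)
    finally show ?thesis
      unfolding reassoc Suc by (simp add: fps_mult_geometric_nth del: power_Suc)
  qed simp
qed

lemma higher_pderiv_monom_choose:
  "(pderiv ^^ r) (monom c k) = monom (fact r * of_nat (k choose r) * c) (k - r)"
proof (induction r)
  case 0
  then show ?case by simp
next
  case (Suc r)
  have "of_nat (k - r) * (fact r * of_nat (k choose r)) =
        (fact (Suc r) * of_nat (k choose Suc r) :: 'a)"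
  proof -
    have "(k - r) * (k choose r) = Suc r * (k choose Suc r)"
      by (metis binomial_absorb_comp binomial_absorption)
    then have "of_nat (k - r) * of_nat (k choose r) = (of_nat (Suc r) * of_nat (k choose Suc r) :: 'a)"
      by (metis of_nat_mult)
    then show ?thesis
      by (simp add: mult_ac)
  qed
  then show ?case
    using Suc by (simp add: pderiv_monom mult.assoc[symmetric])
qed

lemma power_mult_poly_higher_pderiv_sum_monom:
  fixes c :: "nat \<Rightarrow> 'a::{comm_semiring_1,semiring_no_zero_divisors,semiring_char_0}"
  shows "x ^ r * poly ((pderiv ^^ r) (\<Sum>k\<in>A. monom (c k) k)) x =
         fact r * (\<Sum>k\<in>A. of_nat (k choose r) * c k * x ^ k)"
proof -
  have "x ^ r * (of_nat (k choose r) * x ^ (k - r)) = of_nat (k choose r) * x ^ k" for k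
  proof (cases "r \<le> k")
    case True
    then have "x ^ r * x ^ (k - r) = x ^ k"
      by (simp flip: power_add)
    then show ?thesis
      by (metis mult.left_commute)
  qed (simp add: binomial_eq_0)
  then show ?thesis
    by (simp add: higher_pderiv_sum higher_pderiv_monom_choose poly_sum poly_monom
        sum_distrib_left mult_ac)
qed

definition central_diff_fps :: "real fps" where
  "central_diff_fps = fps_exp (1/2) - fps_exp (-1/2)"

lemma central_diff_fps_nth_0 [simp]: "central_diff_fps $ 0 = 0"
  by (simp add: central_diff_fps_def)

lemma central_diff_fps_power:
  "central_diff_fps ^ k =
     (\<Sum>j\<le>k. fps_const ((-1) ^ j * real (k choose j)) * fps_exp (real k / 2 - real j))"
proof -
  have "central_diff_fps ^ k = (- fps_exp (-1/2) + fps_exp (1/2)) ^ k"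
    by (simp add: central_diff_fps_def)
  also have "\<dots> = (\<Sum>j\<le>k. of_nat (k choose j) * (- fps_exp (-1/2)) ^ j * fps_exp (1/2) ^ (k - j))"
    by (rule binomial_ring)
  also have "\<dots> = (\<Sum>j\<le>k. fps_const ((-1) ^ j * real (k choose j)) * fps_exp (real k / 2 - real j))"
  proof (rule sum.cong[OF refl])
    fix j assume "j \<in> {..k}"
    then have "real (k - j) = real k - real j"
      by (simp add: of_nat_diff)
    then have "of_nat j * (-1/2) + of_nat (k - j) * (1/2) = real k / 2 - real j"
      by linarith
    then have "fps_exp (of_nat j * (-1/2)) * fps_exp (of_nat (k - j) * (1/2)) =
               fps_exp (real k / 2 - real j)"
      by (metis fps_exp_add_mult)
    moreover have "(- fps_exp (-1/2 :: real)) ^ j = fps_const ((-1) ^ j) * fps_exp (of_nat j * (-1/2))"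
      by (subst power_minus) (simp only: fps_minus_one_power fps_exp_power_mult)
    moreover have "(of_nat (k choose j) :: real fps) = fps_const (real (k choose j))"
      by (rule fps_of_nat[symmetric])
    ultimately show "of_nat (k choose j) * (- fps_exp (-1/2)) ^ j * fps_exp (1/2) ^ (k - j) =
       fps_const ((-1) ^ j * real (k choose j)) * fps_exp (real k / 2 - real j)"
      by (simp add: fps_exp_power_mult mult_ac)
  qed
  finally show ?thesis .
qed

lemma central_diff_fps_power_nth:
  "(central_diff_fps ^ k) $ m =
     (\<Sum>j\<le>k. (-1) ^ j * real (k choose j) * (real k / 2 - real j) ^ m) / fact m"
  by (simp add: central_diff_fps_power fps_sum_nth sum_divide_distrib)

lemma fact_mult_central_T:
  "k \<le> m \<Longrightarrow> fact k * central_T m k = fact m * (central_diff_fps ^ k) $ m"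
  by (simp add: central_T_def central_diff_fps_power_nth)

definition central_fubini_egf :: "real \<Rightarrow> real fps" where
  "central_fubini_egf x = inverse (1 - fps_const x * central_diff_fps)"

lemma central_fubini_egf_compose:
  "central_fubini_egf x = Abs_fps (\<lambda>_. 1) oo (fps_const x * central_diff_fps)"
  by (simp add: central_fubini_egf_def gp fps_divide_unit)

lemma central_fubini_egf_minus_one:
  "central_fubini_egf x - 1 = fps_const x * central_diff_fps * central_fubini_egf x"
proof -
  have "central_fubini_egf x * (1 - fps_const x * central_diff_fps) = 1"
    unfolding central_fubini_egf_def by (rule inverse_mult_eq_1) simp
  then show ?thesis
    by (simp add: algebra_simps)
qed

lemma poly_central_fubini: "poly (central_fubini m) x = fact m * central_fubini_egf x $ m"
proof -
  have "poly (central_fubini m) x = (\<Sum>k\<le>m. fact k * central_T m k * x ^ k)"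
    by (simp add: central_fubini_def poly_sum poly_monom)
  also have "\<dots> = fact m * (\<Sum>k\<le>m. x ^ k * (central_diff_fps ^ k) $ m)"
    by (auto simp: fact_mult_central_T sum_distrib_left mult_ac intro!: sum.cong)
  also have "\<dots> = fact m * central_fubini_egf x $ m"
    by (simp add: central_fubini_egf_compose fps_compose_scaled_nth)
  finally show ?thesis .
qed

lemma power_mult_poly_higher_pderiv_central_fubini:
  "x ^ r * poly ((pderiv ^^ r) (central_fubini n)) x =
   fact r * fact n * ((fps_const x * central_diff_fps) ^ r * central_fubini_egf x ^ Suc r) $ n"
proof -
  let ?U = "Abs_fps (\<lambda>_. 1) :: real fps" and ?xS = "fps_const x * central_diff_fps"
  have xS_0: "?xS $ 0 = 0"
    by simp
  have "x ^ r * poly ((pderiv ^^ r) (central_fubini n)) x =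
        fact r * (\<Sum>k\<le>n. of_nat (k choose r) * (fact k * central_T n k) * x ^ k)"
    unfolding central_fubini_def by (rule power_mult_poly_higher_pderiv_sum_monom)
  also have "\<dots> = fact r * fact n * (\<Sum>k\<le>n. of_nat (k choose r) * x ^ k * (central_diff_fps ^ k) $ n)"
    by (auto simp: fact_mult_central_T sum_distrib_left mult_ac intro!: sum.cong)
  also have "\<dots> = fact r * fact n * ((fps_X ^ r * ?U ^ Suc r) oo ?xS) $ n"
    by (simp add: fps_compose_scaled_nth fps_X_power_mult_geometric_power_nth del: power_Suc)
  also have "(fps_X ^ r * ?U ^ Suc r) oo ?xS = (fps_X oo ?xS) ^ r * (?U oo ?xS) ^ Suc r"
    by (simp only: fps_compose_mult_distrib[OF xS_0] fps_compose_power[OF xS_0])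
  also have "\<dots> = ?xS ^ r * central_fubini_egf x ^ Suc r"
    by (simp add: central_fubini_egf_compose del: power_Suc)
  finally show ?thesis .
qed

lemma sum_compositions_multinom_central_fubini:
  "(\<Sum>j\<in>compositions k n. multinom n k j * (\<Prod>i\<le>k. poly (central_fubini (j i)) x)) =
   fact n * (central_fubini_egf x ^ Suc k) $ n"
proof -
  have "multinom n k j * (\<Prod>i\<le>k. poly (central_fubini (j i)) x) =
        fact n * (\<Prod>i\<le>k. central_fubini_egf x $ j i)" for j
    by (simp add: multinom_def poly_central_fubini prod.distrib)
  then show ?thesis
    by (simp add: fps_power_Suc_nth_compositions sum_distrib_left del: power_Suc)
qed

theorem theorem7:
  fixes n r :: nat and x :: real
  assumes "x \<noteq> 0"
  shows "poly ((pderiv ^^ r) (central_fubini n)) x =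
    fact r / x ^ r * (\<Sum>k\<le>r. real (r choose k) * (-1) ^ (r - k) *
      (\<Sum>j\<in>compositions k n. multinom n k j * (\<Prod>i\<le>k. poly (central_fubini (j i)) x)))"
proof -
  let ?G = "central_fubini_egf x"
  have "(fps_const x * central_diff_fps) ^ r * ?G ^ Suc r = ?G * (?G - 1) ^ r"
    by (simp add: central_fubini_egf_minus_one power_mult_distrib)
  then have "x ^ r * poly ((pderiv ^^ r) (central_fubini n)) x =
      fact r * (\<Sum>k\<le>r. real (r choose k) * (-1) ^ (r - k) * (fact n * (?G ^ Suc k) $ n))"
    by (simp add: power_mult_poly_higher_pderiv_central_fubini fps_mult_diff_one_power_nth
        sum_distrib_left mult_ac del: power_Suc)
  then show ?thesis
    using assms by (simp add: sum_compositions_multinom_central_fubini field_simps del: power_Suc)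
qed

end
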